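(* Let $\tau>\frac{3+\sqrt{17}}{2}$. For Lebesgue-almost every $\gamma\in(0,\tfrac12)$ the following holds: for every $\alpha\in D_{\gamma,\tau}$ with convergents $p_n/q_n$, for all sufficiently large even $n$, $$\frac{p_n}{q_n}+\frac{\gamma}{q_n^{\tau+1}}<\frac{p_{n+2}}{q_{n+2}}-\frac{\gamma}{q_{n+2}^{\tau+1}} \iff \frac{p_n}{q_n}+\frac{\gamma}{q_n^{\tau+1}}<\frac{p_{n+2}}{q_{n+2}}-\frac{\gamma}{q_{n+2}^{\tau+1}}-\frac{2\gamma}{q_{n+2}^{\tau-1}}.$$
   Context: For $x\in\mathbb{R}$, $\|x\|:=\min_{p\in\mathbb{Z}}|x-p|$; $\mathbb{N}=\{1,2,\dots\}$. For $\gamma>0,\tau\ge1$, $D_{\gamma,\tau}:=\{\alpha\in(0,1): \|q\alpha\|\ge\gamma/q^\tau\ \forall q\in\mathbb{N}\}$; its elements are irrational. For irrational $\alpha\in(0,1)$ write $\alpha=\cfrac{1}{a_1+\cfrac{1}{a_2+\cdots}}$, and let $p_n/q_n$ ($n\ge0$) be its convergents: $p_{-1}=1,q_{-1}=0,p_0=0,q_0=1$, $p_n=a_np_{n-1}+p_{n-2}$, $q_n=a_nq_{n-1}+q_{n-2}$. *)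

theory Defs
  imports "HOL-Analysis.Analysis"
begin

definition dist_int :: "real \<Rightarrow> real" where
  "dist_int x = (INF p::int. \<bar>x - real_of_int p\<bar>)"

definition Dset :: "real \<Rightarrow> real \<Rightarrow> real set" where
  "Dset \<gamma> \<tau> = {\<alpha>. 0 < \<alpha> \<and> \<alpha> < 1 \<and>
      (\<forall>q::nat. q \<ge> 1 \<longrightarrow> dist_int (real q * \<alpha>) \<ge> \<gamma> / real q powr \<tau>)}"

fun cf_rem :: "real \<Rightarrow> nat \<Rightarrow> real" where
  "cf_rem \<alpha> 0 = \<alpha>"
| "cf_rem \<alpha> (Suc n) = frac (1 / cf_rem \<alpha> n)"

definition cf_a :: "real \<Rightarrow> nat \<Rightarrow> int" where
  "cf_a \<alpha> n = \<lfloor>1 / cf_rem \<alpha> (n - 1)\<rfloor>"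

text \<open>Convergents p_n/q_n for n >= 0, using p_{-1}=1, q_{-1}=0, p_0=0, q_0=1.\<close>
fun cf_p :: "real \<Rightarrow> nat \<Rightarrow> int" where
  "cf_p \<alpha> 0 = 0"
| "cf_p \<alpha> (Suc 0) = cf_a \<alpha> 1 * 0 + 1"
| "cf_p \<alpha> (Suc (Suc n)) = cf_a \<alpha> (n + 2) * cf_p \<alpha> (Suc n) + cf_p \<alpha> n"

fun cf_q :: "real \<Rightarrow> nat \<Rightarrow> int" where
  "cf_q \<alpha> 0 = 1"
| "cf_q \<alpha> (Suc 0) = cf_a \<alpha> 1 * 1 + 0"
| "cf_q \<alpha> (Suc (Suc n)) = cf_a \<alpha> (n + 2) * cf_q \<alpha> (Suc n) + cf_q \<alpha> n"

end

theory Submission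
  imports Defs
begin

(*
  For even n write Q = q_n, Q' = q_(n+2), a = a_(n+2), so that p_(n+2) Q - p_n Q' = a. The two
  inequalities can only disagree when the gap a/(Q Q') lies in (gamma c, gamma (c + t)] with
  c = Q^-(tau+1) + Q'^-(tau+1) and t = 2 Q'^(1-tau). This confines gamma to an interval of length
  at most 2 a Q^(2 tau + 1) / Q'^tau, and the interval meets (0, 1/2) only if Q' > a Q^tau.
  Exchanging Q'^(tau-1-eps) for (a Q^tau)^(tau-1-eps), the union of these intervals over all
  Q, a <= Q' has measure O(Q'^-(1+eps)) as soon as tau - 2 - eps > 1 and
  tau (tau - 1 - eps) - 2 tau - 1 > 1; a suitable eps > 0 exists exactly when
  tau^2 - 3 tau - 2 > 0, i.e. tau > (3 + sqrt 17)/2. By Borel-Cantelli almost every gamma lies in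
  only finitely many of these unions, and since q_n grows the claim follows for every irrational
  alpha; the Diophantine condition is used only to know that alpha is irrational.
*)

lemma cf_pq_det:
  "cf_p \<alpha> (Suc n) * cf_q \<alpha> n - cf_p \<alpha> n * cf_q \<alpha> (Suc n) = (-1) ^ n"
proof (induction n)
  case (Suc n)
  have "cf_p \<alpha> (Suc (Suc n)) * cf_q \<alpha> (Suc n) - cf_p \<alpha> (Suc n) * cf_q \<alpha> (Suc (Suc n))
      = -(cf_p \<alpha> (Suc n) * cf_q \<alpha> n - cf_p \<alpha> n * cf_q \<alpha> (Suc n))"
    by (simp add: algebra_simps)
  with Suc show ?case by simp
qed simp

lemma cf_pq_det2:
  "cf_p \<alpha> (n + 2) * cf_q \<alpha> n - cf_p \<alpha> n * cf_q \<alpha> (n + 2) = cf_a \<alpha> (n + 2) * (-1) ^ n"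
proof -
  have "cf_p \<alpha> (n + 2) * cf_q \<alpha> n - cf_p \<alpha> n * cf_q \<alpha> (n + 2)
      = cf_a \<alpha> (n + 2) * (cf_p \<alpha> (Suc n) * cf_q \<alpha> n - cf_p \<alpha> n * cf_q \<alpha> (Suc n))"
    by (simp add: algebra_simps)
  then show ?thesis by (simp add: cf_pq_det)
qed

lemma cf_rem_irrational:
  assumes "\<alpha> \<notin> \<rat>" "0 < \<alpha>" "\<alpha> < 1"
  shows "cf_rem \<alpha> n \<notin> \<rat> \<and> 0 < cf_rem \<alpha> n \<and> cf_rem \<alpha> n < 1"
proof (induction n)
  case (Suc n)
  then have "1 / cf_rem \<alpha> n \<notin> \<rat>"
    by (metis Rats_inverse_iff inverse_eq_divide)
  moreover have "frac (1 / cf_rem \<alpha> n) \<noteq> 0"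
    using calculation frac_eq_0_iff by (metis Ints_subset_Rats subsetD)
  ultimately show ?case
    by (simp add: frac_lt_1 order_le_neq_trans)
qed (use assms in simp)

lemma cf_a_ge_1:
  assumes "\<alpha> \<notin> \<rat>" "0 < \<alpha>" "\<alpha> < 1" "k \<ge> 1"
  shows "cf_a \<alpha> k \<ge> 1"
proof -
  have "1 \<le> 1 / cf_rem \<alpha> (k - 1)"
    using cf_rem_irrational[OF assms(1-3), of "k - 1"] by simp
  then show ?thesis unfolding cf_a_def by linarith
qed

lemma cf_q_ge_index:
  assumes "\<And>k. k \<ge> 1 \<Longrightarrow> cf_a \<alpha> k \<ge> 1"
  shows "1 \<le> cf_q \<alpha> n \<and> int n \<le> cf_q \<alpha> n"
  using assms
proof (induction \<alpha> n rule: cf_q.induct)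
  case (3 \<beta> n)
  have "cf_q \<beta> (Suc n) \<le> cf_a \<beta> (n + 2) * cf_q \<beta> (Suc n)"
    using 3 by (simp add: mult_le_cancel_right1)
  moreover have "1 \<le> cf_q \<beta> n" "1 + int n \<le> cf_q \<beta> (Suc n)"
    using 3 by auto
  ultimately show ?case unfolding cf_q.simps of_nat_Suc by linarith
qed auto

lemma cf_a_le_cf_q:
  assumes "\<And>k. k \<ge> 1 \<Longrightarrow> cf_a \<alpha> k \<ge> 1"
  shows "cf_a \<alpha> (n + 2) \<le> cf_q \<alpha> (n + 2)"
proof -
  have "cf_a \<alpha> (n + 2) \<le> cf_a \<alpha> (n + 2) * cf_q \<alpha> (Suc n)"
    using assms[of "n + 2"] cf_q_ge_index[OF assms, of "Suc n"] by (simp add: mult_le_cancel_left1)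
  then show ?thesis using cf_q_ge_index[OF assms, of n] by (simp add: numeral_2_eq_2)
qed

lemma cf_q_le_cf_q_add2:
  assumes "\<And>k. k \<ge> 1 \<Longrightarrow> cf_a \<alpha> k \<ge> 1"
  shows "cf_q \<alpha> n \<le> cf_q \<alpha> (n + 2)"
  using assms[of "n + 2"] cf_q_ge_index[OF assms, of "Suc n"] by (simp add: numeral_2_eq_2)

lemma Dset_not_Rats:
  assumes "\<alpha> \<in> Dset \<gamma> \<tau>" "0 < \<gamma>"
  shows "\<alpha> \<notin> \<rat>"
proof
  assume "\<alpha> \<in> \<rat>"
  then obtain r s where "0 < s" "\<alpha> = of_int r / of_int s" by (metis Rats_cases')
  then have "1 \<le> nat s" "real (nat s) * \<alpha> = of_int r" by simp_all
  then have "dist_int (real (nat s) * \<alpha>) \<le> 0"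
    unfolding dist_int_def by (intro cINF_lower2[where x = r]) (auto intro: bdd_belowI[of _ 0])
  moreover have "\<gamma> / real (nat s) powr \<tau> \<le> dist_int (real (nat s) * \<alpha>)"
    using assms(1) \<open>1 \<le> nat s\<close> unfolding Dset_def by auto
  moreover have "0 < \<gamma> / real (nat s) powr \<tau>" using \<open>1 \<le> nat s\<close> assms(2) by simp
  ultimately show False by linarith
qed

definition bad_gammas :: "real \<Rightarrow> real \<Rightarrow> real \<Rightarrow> real \<Rightarrow> real set" where
  "bad_gammas \<tau> q q' a =
     {a / (q * q') / (1 / q powr (\<tau> + 1) + 1 / q' powr (\<tau> + 1) + 2 / q' powr (\<tau> - 1)) ..<
      a / (q * q') / (1 / q powr (\<tau> + 1) + 1 / q' powr (\<tau> + 1))} \<inter> {0<..<1/2}"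

lemma bad_gammasI:
  assumes "q > 0" "q' > 0" "0 < g" "g < 1/2"
    and "g / q powr (\<tau> + 1) + g / q' powr (\<tau> + 1) < a / (q * q')"
    and "a / (q * q') \<le> g / q powr (\<tau> + 1) + g / q' powr (\<tau> + 1) + 2 * g / q' powr (\<tau> - 1)"
  shows "g \<in> bad_gammas \<tau> q q' a"
proof -
  define c where "c = 1 / q powr (\<tau> + 1) + 1 / q' powr (\<tau> + 1)"
  define t where "t = 2 / q' powr (\<tau> - 1)"
  have "c > 0" "t > 0" using assms unfolding c_def t_def by (simp_all add: add_pos_pos)
  moreover have "g * c < a / (q * q')" "a / (q * q') \<le> g * (c + t)"
    using assms(5,6) unfolding c_def t_def by (simp_all add: field_simps)
  ultimately have "a / (q * q') / (c + t) \<le> g" "g < a / (q * q') / c"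
    by (subst pos_divide_le_eq pos_less_divide_eq; simp add: mult.commute)+
  then show ?thesis
    using assms(3,4) unfolding bad_gammas_def c_def t_def by simp
qed

lemma bad_gammas_nonempty_imp_less:
  assumes "g \<in> bad_gammas \<tau> q q' a"
    and "3 < \<tau>" "1 \<le> q" "q \<le> q'" "1 \<le> a" "3 \<le> q powr (\<tau> - 3)"
  shows "a * q powr \<tau> < q'"
proof -
  define S where "S = 1 / q powr (\<tau> + 1) + 1 / q' powr (\<tau> + 1) + 2 / q' powr (\<tau> - 1)"
  have "q' > 0" using assms by linarith
  then have "S > 0" using assms unfolding S_def by (simp add: add_pos_pos)
  have "a / (q * q') / S \<le> g" "g < 1 / 2"
    using assms(1) unfolding bad_gammas_def S_def [symmetric] by auto
  then have "a / (q * q') / S < 1 / 2" by linarith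
  then have "2 * a < q * q' * S"
    using assms \<open>q' > 0\<close> \<open>S > 0\<close> by (simp add: field_simps)
  also have "\<dots> = q' * q powr (- \<tau>) + q * q' powr (- \<tau>) + 2 * q * q' powr (2 - \<tau>)"
    using assms \<open>q' > 0\<close> unfolding S_def
    by (simp add: field_simps powr_minus_divide powr_diff powr_add power2_eq_square)
  also have "\<dots> \<le> q' * q powr (- \<tau>) + q * q powr (- \<tau>) + 2 * q * q powr (2 - \<tau>)"
    using assms by (intro add_mono mult_left_mono powr_mono2') auto
  also have "\<dots> \<le> q' * q powr (- \<tau>) + 1"
  proof -
    have "q powr (3 - \<tau>) = 1 / q powr (\<tau> - 3)"
      using powr_minus_divide[of q "\<tau> - 3"] by simp
    then have "q powr (3 - \<tau>) \<le> 1 / 3"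
      using assms(6) by (simp add: divide_le_eq)
    moreover have "q * q powr (- \<tau>) \<le> q powr (3 - \<tau>)" "q * q powr (2 - \<tau>) = q powr (3 - \<tau>)"
      using assms by (simp_all add: powr_mult_base powr_mono)
    ultimately show ?thesis by linarith
  qed
  finally have "2 * a < q' * q powr (- \<tau>) + 1" .
  then have "a < q' * q powr (- \<tau>)" using assms by linarith
  then show ?thesis using assms by (simp add: powr_minus_divide field_simps)
qed

lemma measure_lborel_window_le:
  fixes x c t :: real
  assumes "0 \<le> x" "0 < c" "0 < t"
  shows "measure lborel {x / (c + t) .. x / c} \<le> x * t / c\<^sup>2"
proof -
  have "x / (c + t) \<le> x / c" using assms by (intro divide_left_mono) auto
  then have "measure lborel {x / (c + t) .. x / c} = x / c - x / (c + t)" by simp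
  also have "\<dots> = x * t / (c * (c + t))" using assms by (simp add: field_simps)
  also have "\<dots> \<le> x * t / c\<^sup>2"
    using assms unfolding power2_eq_square by (intro divide_left_mono mult_left_mono) auto
  finally show ?thesis .
qed

lemma bad_gammas_sets [measurable]: "bad_gammas \<tau> q q' a \<in> sets borel"
  unfolding bad_gammas_def by simp

lemma measure_bad_gammas_le:
  assumes "1 \<le> q" "1 \<le> q'" "0 < a"
  shows "measure lborel (bad_gammas \<tau> q q' a) \<le> 2 * a * q powr (2 * \<tau> + 1) / q' powr \<tau>"
proof -
  define c1 where "c1 = 1 / q powr (\<tau> + 1)"
  define c2 where "c2 = 1 / q' powr (\<tau> + 1)"
  define t where "t = 2 / q' powr (\<tau> - 1)"
  define x where "x = a / (q * q')"
  have pos: "c1 > 0" "c2 > 0" "t > 0" "x > 0"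
    using assms unfolding c1_def c2_def t_def x_def by auto
  have "measure lborel (bad_gammas \<tau> q q' a) \<le> measure lborel {x / (c1 + c2 + t) .. x / (c1 + c2)}"
    unfolding bad_gammas_def c1_def c2_def t_def x_def
    by (intro measure_mono_fmeasurable fmeasurable_compact) auto
  also have "\<dots> \<le> x * t / (c1 + c2)\<^sup>2"
    using pos by (intro measure_lborel_window_le) auto
  also have "\<dots> \<le> x * t / c1\<^sup>2"
    using pos by (intro divide_left_mono power_mono) auto
  also have "\<dots> = 2 * a * q powr (2 * \<tau> + 1) / q' powr \<tau>"
  proof -
    have "(q powr (\<tau> + 1))\<^sup>2 = q powr (2 * \<tau> + 1) * q"
      using assms by (simp add: power2_eq_square powr_add [symmetric] powr_mult_base algebra_simps)
    moreover have "q' powr \<tau> = q' powr (\<tau> - 1) * q'"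
      using assms powr_mult_base[of q' "\<tau> - 1"] by (simp add: mult.commute)
    ultimately show ?thesis
      unfolding c1_def t_def x_def using assms by (simp add: field_simps)
  qed
  finally show ?thesis .
qed

lemma powr_exchange_le:
  fixes q q' a \<epsilon> \<tau> :: real
  assumes "1 \<le> q" "1 \<le> a" "a * q powr \<tau> \<le> q'" "0 < \<epsilon>" "\<epsilon> < \<tau> - 1"
  shows "2 * a * q powr (2 * \<tau> + 1) / q' powr \<tau> \<le>
    2 * q' powr (- (1 + \<epsilon>)) * (a powr (- (\<tau> - 2 - \<epsilon>)) * q powr (- (\<tau> * (\<tau> - 1 - \<epsilon>) - 2 * \<tau> - 1)))"
proof -
  have "0 < a * q powr \<tau>" using assms by simp
  then have "0 < q'" using assms by linarith
  have "q' powr (1 + \<epsilon>) * (a * q powr \<tau>) powr (\<tau> - 1 - \<epsilon>) \<le> q' powr (1 + \<epsilon>) * q' powr (\<tau> - 1 - \<epsilon>)"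
    using assms by (intro mult_left_mono powr_mono2) auto
  also have "\<dots> = q' powr \<tau>" by (simp add: powr_add [symmetric])
  finally have "q' powr (1 + \<epsilon>) * (a powr (\<tau> - 1 - \<epsilon>) * q powr (\<tau> * (\<tau> - 1 - \<epsilon>))) \<le> q' powr \<tau>"
    using assms by (simp add: powr_mult powr_powr)
  then have "2 * a * q powr (2 * \<tau> + 1) / q' powr \<tau> \<le>
      2 * a * q powr (2 * \<tau> + 1) /
        (q' powr (1 + \<epsilon>) * (a powr (\<tau> - 1 - \<epsilon>) * q powr (\<tau> * (\<tau> - 1 - \<epsilon>))))"
    using assms \<open>0 < q'\<close> by (intro divide_left_mono mult_pos_pos) auto
  also have "\<dots> = 2 * q' powr (- (1 + \<epsilon>)) *
      (a powr (- (\<tau> - 2 - \<epsilon>)) * q powr (- (\<tau> * (\<tau> - 1 - \<epsilon>) - 2 * \<tau> - 1)))"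
    using assms powr_add[of q \<tau> "\<tau> * 2"]
    by (simp add: powr_minus_divide powr_diff powr_add field_simps power2_eq_square)
  finally show ?thesis .
qed

lemma measure_bad_gammas_le_decay:
  assumes "3 < \<tau>" "0 < \<epsilon>" "\<epsilon> < \<tau> - 1"
    and "1 \<le> q" "3 \<le> q powr (\<tau> - 3)" "q \<le> q'" "1 \<le> a"
  shows "measure lborel (bad_gammas \<tau> q q' a) \<le>
    2 * q' powr (- (1 + \<epsilon>)) * (a powr (- (\<tau> - 2 - \<epsilon>)) * q powr (- (\<tau> * (\<tau> - 1 - \<epsilon>) - 2 * \<tau> - 1)))"
proof (cases "bad_gammas \<tau> q q' a = {}")
  case False
  then obtain g where "g \<in> bad_gammas \<tau> q q' a" by auto
  then have "a * q powr \<tau> < q'"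
    using assms by (intro bad_gammas_nonempty_imp_less) auto
  then show ?thesis
    using assms measure_bad_gammas_le[of q q' a \<tau>] powr_exchange_le[of q a \<tau> q' \<epsilon>] by simp
qed simp

definition bad_gammas_union :: "real \<Rightarrow> nat \<Rightarrow> nat \<Rightarrow> real set" where
  "bad_gammas_union \<tau> q0 m = (\<Union>q\<in>{q0..m}. \<Union>a\<in>{1..m}. bad_gammas \<tau> (real q) (real m) (real a))"

lemma bad_gammas_union_sets [measurable]: "bad_gammas_union \<tau> q0 m \<in> sets borel"
  unfolding bad_gammas_union_def by (intro sets.finite_UN) auto

lemma emeasure_bad_gammas_union_finite: "emeasure lborel (bad_gammas_union \<tau> q0 m) < \<infinity>"
  by (intro emeasure_bounded_finite bounded_subset [OF bounded_closed_interval [of 0 "1/2"]])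
    (auto simp: bad_gammas_union_def bad_gammas_def)

lemma summable_measure_bad_gammas_union:
  assumes "0 < \<epsilon>" "1 < \<tau> - 2 - \<epsilon>" "1 < \<tau> * (\<tau> - 1 - \<epsilon>) - 2 * \<tau> - 1"
    and "\<And>x. real q0 \<le> x \<Longrightarrow> 3 \<le> x powr (\<tau> - 3)"
  shows "summable (\<lambda>m. measure lborel (bad_gammas_union \<tau> q0 m))"
proof -
  have "3 < \<tau>" "\<epsilon> < \<tau> - 1" using assms(1,2) by linarith+
  have "1 \<le> q0" using assms(4)[of q0] by (cases q0) auto
  define e1 where "e1 = \<tau> - 2 - \<epsilon>"
  define e2 where "e2 = \<tau> * (\<tau> - 1 - \<epsilon>) - 2 * \<tau> - 1"
  have s1: "summable (\<lambda>n. real n powr (- e1))" and s2: "summable (\<lambda>n. real n powr (- e2))"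
    using assms unfolding e1_def e2_def by (simp_all add: summable_real_powr_iff)
  define K where "K = (\<Sum>n. real n powr (- e2)) * (\<Sum>n. real n powr (- e1))"
  have bound: "measure lborel (bad_gammas_union \<tau> q0 m) \<le> 2 * real m powr (- (1 + \<epsilon>)) * K" for m
  proof -
    have "measure lborel (bad_gammas_union \<tau> q0 m)
        \<le> (\<Sum>q\<in>{q0..m}. \<Sum>a\<in>{1..m}. measure lborel (bad_gammas \<tau> (real q) (real m) (real a)))"
      unfolding bad_gammas_union_def
      by (intro order_trans [OF measure_UNION_le] sum_mono measure_UNION_le) auto
    also have "\<dots> \<le> (\<Sum>q\<in>{q0..m}. \<Sum>a\<in>{1..m}.
        2 * real m powr (- (1 + \<epsilon>)) * (real q powr (- e2) * real a powr (- e1)))"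
      using assms \<open>3 < \<tau>\<close> \<open>\<epsilon> < \<tau> - 1\<close> \<open>1 \<le> q0\<close> unfolding e1_def e2_def
      by (intro sum_mono order_trans [OF measure_bad_gammas_le_decay]) (auto simp: mult_ac)
    also have "\<dots> = 2 * real m powr (- (1 + \<epsilon>)) *
        ((\<Sum>q\<in>{q0..m}. real q powr (- e2)) * (\<Sum>a\<in>{1..m}. real a powr (- e1)))"
      by (subst sum_product) (simp add: sum_distrib_left)
    also have "\<dots> \<le> 2 * real m powr (- (1 + \<epsilon>)) * K"
      unfolding K_def using s1 s2
      by (intro mult_left_mono mult_mono sum_le_suminf sum_nonneg suminf_nonneg) auto
    finally show ?thesis .
  qed
  have "summable (\<lambda>m. 2 * real m powr (- (1 + \<epsilon>)) * K)"
    using assms by (intro summable_mult summable_mult2) (simp add: summable_real_powr_iff)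
  then show ?thesis
    by (rule summable_comparison_test' [where N = 0]) (use bound in simp)
qed

lemma exponent_margin:
  fixes \<tau> :: real
  assumes "(3 + sqrt 17) / 2 < \<tau>"
  shows "\<exists>\<epsilon>>0. 1 < \<tau> - 2 - \<epsilon> \<and> 1 < \<tau> * (\<tau> - 1 - \<epsilon>) - 2 * \<tau> - 1"
proof -
  have "3 < sqrt 17" using real_sqrt_less_mono[of 9 17] by simp
  then have "3 < \<tau>" using assms by simp
  have "(sqrt 17)\<^sup>2 < (2 * \<tau> - 3)\<^sup>2"
    using assms by (intro power_strict_mono) auto
  then have pos: "0 < \<tau> * \<tau> - 3 * \<tau> - 2" by (simp add: power2_eq_square algebra_simps)
  define \<epsilon> where "\<epsilon> = (\<tau> * \<tau> - 3 * \<tau> - 2) / (2 * \<tau>)"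
  have "0 < \<epsilon>" using pos \<open>3 < \<tau>\<close> unfolding \<epsilon>_def by simp
  moreover have "1 < \<tau> - 2 - \<epsilon>"
  proof -
    have "\<tau> * 3 < \<tau> * \<tau>" using \<open>3 < \<tau>\<close> by (intro mult_strict_left_mono) auto
    then show ?thesis using \<open>3 < \<tau>\<close> unfolding \<epsilon>_def by (simp add: field_simps; linarith)
  qed
  moreover have "\<tau> * (\<tau> - 1 - \<epsilon>) - 2 * \<tau> - 1 = 1 + (\<tau> * \<tau> - 3 * \<tau> - 2) / 2"
    using \<open>3 < \<tau>\<close> unfolding \<epsilon>_def by (simp add: field_simps)
  ultimately show ?thesis using pos by auto
qed

lemma exists_nat_powr_ge:
  fixes c e :: real
  assumes "0 < c" "0 < e"
  shows "\<exists>N::nat. \<forall>x \<ge> real N. c \<le> x powr e"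
proof (intro exI allI impI)
  fix x assume "real (nat \<lceil>c powr (1 / e)\<rceil> + 1) \<le> x"
  then have "c powr (1 / e) \<le> x" by linarith
  then have "(c powr (1 / e)) powr e \<le> x powr e" using assms by (intro powr_mono2) auto
  then show "c \<le> x powr e" using assms by (simp add: powr_powr)
qed

lemma gap_iff_notin_bad_gammas:
  fixes P Q P' Q' a g \<tau> :: real
  assumes "1 \<le> Q" "1 \<le> Q'" "0 < g" "g < 1/2" "P' * Q - P * Q' = a"
    and "g \<notin> bad_gammas \<tau> Q Q' a"
  shows "P / Q + g / Q powr (\<tau> + 1) < P' / Q' - g / Q' powr (\<tau> + 1) \<longleftrightarrow>
    P / Q + g / Q powr (\<tau> + 1) < P' / Q' - g / Q' powr (\<tau> + 1) - 2 * g / Q' powr (\<tau> - 1)"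
proof
  assume below: "P / Q + g / Q powr (\<tau> + 1) < P' / Q' - g / Q' powr (\<tau> + 1)"
  have "P' / Q' - P / Q = a / (Q * Q')" using assms by (simp add: field_simps)
  then show "P / Q + g / Q powr (\<tau> + 1) < P' / Q' - g / Q' powr (\<tau> + 1) - 2 * g / Q' powr (\<tau> - 1)"
    using assms below bad_gammasI[of Q Q' g \<tau> a] by fastforce
next
  have "0 < 2 * g / Q' powr (\<tau> - 1)" using assms by simp
  then show "P / Q + g / Q powr (\<tau> + 1) < P' / Q' - g / Q' powr (\<tau> + 1) - 2 * g / Q' powr (\<tau> - 1) \<Longrightarrow>
    P / Q + g / Q powr (\<tau> + 1) < P' / Q' - g / Q' powr (\<tau> + 1)" by linarith
qed

lemma cf_gap_iff_eventually:
  assumes "\<alpha> \<notin> \<rat>" "0 < \<alpha>" "\<alpha> < 1" "0 < \<gamma>" "\<gamma> < 1/2"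
    and "\<And>m. M \<le> m \<Longrightarrow> \<gamma> \<notin> bad_gammas_union \<tau> q0 m"
  shows "\<forall>\<^sub>F n in sequentially. even n \<longrightarrow>
      (cf_p \<alpha> n / cf_q \<alpha> n + \<gamma> / cf_q \<alpha> n powr (\<tau> + 1)
         < cf_p \<alpha> (n+2) / cf_q \<alpha> (n+2) - \<gamma> / cf_q \<alpha> (n+2) powr (\<tau> + 1)
       \<longleftrightarrow>
       cf_p \<alpha> n / cf_q \<alpha> n + \<gamma> / cf_q \<alpha> n powr (\<tau> + 1)
         < cf_p \<alpha> (n+2) / cf_q \<alpha> (n+2) - \<gamma> / cf_q \<alpha> (n+2) powr (\<tau> + 1)
           - 2 * \<gamma> / cf_q \<alpha> (n+2) powr (\<tau> - 1))"
  unfolding eventually_sequentially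
proof (intro exI[of _ "M + q0"] allI impI, goal_cases)
  case (1 n)
  then have "M + q0 \<le> n" "even n" by simp_all
  have a_ge: "\<And>k. 1 \<le> k \<Longrightarrow> 1 \<le> cf_a \<alpha> k" using cf_a_ge_1 assms(1-3) by blast
  define q q' a where "q = cf_q \<alpha> n" and "q' = cf_q \<alpha> (n + 2)" and "a = cf_a \<alpha> (n + 2)"
  have bounds: "int n \<le> q" "1 \<le> q" "int (n + 2) \<le> q'" "q \<le> q'" "1 \<le> a" "a \<le> q'"
    using cf_q_ge_index[OF a_ge, of n] cf_q_ge_index[OF a_ge, of "n + 2"] cf_q_le_cf_q_add2[OF a_ge]
      a_ge[of "n + 2"] cf_a_le_cf_q[OF a_ge]
    unfolding q_def q'_def a_def by auto
  have "cf_p \<alpha> (n + 2) * q - cf_p \<alpha> n * q' = a"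
    using cf_pq_det2[of \<alpha> n] \<open>even n\<close> unfolding q_def q'_def a_def by simp
  then have det: "real_of_int (cf_p \<alpha> (n + 2)) * q - real_of_int (cf_p \<alpha> n) * q' = a"
    by (metis of_int_diff of_int_eq_iff of_int_mult)
  have notbad: "\<gamma> \<notin> bad_gammas \<tau> q q' a"
  proof
    assume "\<gamma> \<in> bad_gammas \<tau> q q' a"
    with \<open>M + q0 \<le> n\<close> bounds have "\<gamma> \<in> bad_gammas_union \<tau> q0 (nat q')"
      unfolding bad_gammas_union_def by (intro UN_I[of "nat q"] UN_I[of "nat a"]) auto
    then show False using assms(6)[of "nat q'"] \<open>M + q0 \<le> n\<close> bounds by linarith
  qed
  show ?case
    unfolding q_def [symmetric] q'_def [symmetric]
    by (rule gap_iff_notin_bad_gammas [OF _ _ _ _ det notbad]) (use bounds assms(4,5) in auto)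
qed

theorem lemma7:
  fixes \<tau> :: real
  assumes "\<tau> > (3 + sqrt 17) / 2"
  shows "AE \<gamma> in lborel. 0 < \<gamma> \<and> \<gamma> < 1/2 \<longrightarrow>
    (\<forall>\<alpha>\<in>Dset \<gamma> \<tau>. \<forall>\<^sub>F n in sequentially. even n \<longrightarrow>
      (cf_p \<alpha> n / cf_q \<alpha> n + \<gamma> / cf_q \<alpha> n powr (\<tau> + 1)
         < cf_p \<alpha> (n+2) / cf_q \<alpha> (n+2) - \<gamma> / cf_q \<alpha> (n+2) powr (\<tau> + 1)
       \<longleftrightarrow>
       cf_p \<alpha> n / cf_q \<alpha> n + \<gamma> / cf_q \<alpha> n powr (\<tau> + 1)
         < cf_p \<alpha> (n+2) / cf_q \<alpha> (n+2) - \<gamma> / cf_q \<alpha> (n+2) powr (\<tau> + 1)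
           - 2 * \<gamma> / cf_q \<alpha> (n+2) powr (\<tau> - 1)))"
proof -
  obtain \<epsilon> where \<epsilon>: "0 < \<epsilon>" "1 < \<tau> - 2 - \<epsilon>" "1 < \<tau> * (\<tau> - 1 - \<epsilon>) - 2 * \<tau> - 1"
    using exponent_margin[OF assms] by blast
  obtain q0 :: nat where q0: "\<And>x. real q0 \<le> x \<Longrightarrow> 3 \<le> x powr (\<tau> - 3)"
    using exists_nat_powr_ge[of 3 "\<tau> - 3"] \<epsilon> by auto
  have "summable (\<lambda>m. measure lborel (bad_gammas_union \<tau> q0 m))"
    using \<epsilon> q0 by (intro summable_measure_bad_gammas_union) auto
  then have "AE \<gamma> in lborel. \<forall>\<^sub>F m in sequentially. \<gamma> \<in> space lborel - bad_gammas_union \<tau> q0 m"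
    by (intro borel_cantelli_AE1 [OF _ emeasure_bad_gammas_union_finite]) simp_all
  then show ?thesis
  proof (rule eventually_mono, intro impI ballI, goal_cases)
    case (1 \<gamma> \<alpha>)
    then obtain M where "\<And>m. M \<le> m \<Longrightarrow> \<gamma> \<notin> bad_gammas_union \<tau> q0 m"
      unfolding eventually_sequentially by auto
    moreover have "\<alpha> \<notin> \<rat>" "0 < \<alpha>" "\<alpha> < 1"
      using 1 Dset_not_Rats unfolding Dset_def by auto
    ultimately show ?case
      using 1 by (intro cf_gap_iff_eventually) auto
  qed
qed

end
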